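(* If $q$ is an odd prime power and $\mathcal{S}$ is a $(q+2)$-element subset of $\mathbb{P}^2(\mathbb{F}_q)$, then there are at most two points $P\in\mathcal{S}$ with the property that no line through $P$ contains more than two points of $\mathcal{S}$. *)

theory Defs
  imports Main
begin

text \<open>Projective plane P^2(F) over a field F, with homogeneous coordinates as triples.\<close>

definition dot3 :: "'a::field \<times> 'a \<times> 'a \<Rightarrow> 'a \<times> 'a \<times> 'a \<Rightarrow> 'a" where
  "dot3 l v = (case l of (a, b, c) \<Rightarrow> case v of (x, y, z) \<Rightarrow> a * x + b * y + c * z)"

definition proj_pt :: "'a::field \<times> 'a \<times> 'a \<Rightarrow> ('a \<times> 'a \<times> 'a) set" where
  "proj_pt v = (case v of (x, y, z) \<Rightarrow> {(c * x, c * y, c * z) | c. c \<noteq> 0})"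

definition proj_points :: "('a::field \<times> 'a \<times> 'a) set set" where
  "proj_points = proj_pt ` {v. v \<noteq> (0, 0, 0)}"

definition proj_line :: "'a::field \<times> 'a \<times> 'a \<Rightarrow> ('a \<times> 'a \<times> 'a) set set" where
  "proj_line l = {P \<in> proj_points. \<forall>v\<in>P. dot3 l v = 0}"

definition proj_lines :: "('a::field \<times> 'a \<times> 'a) set set set" where
  "proj_lines = proj_line ` {l. l \<noteq> (0, 0, 0)}"

end

theory Submission
  imports Defs
begin

(* Suppose A, B, C are points of S through which no line meets S in three or more points.
   Then A, B, C are not collinear, and the q - 1 remaining points R of S lie one on each of
   the q - 1 lines through A other than AB and AC.  These lines are parametrised injectively
   by det(C,A,R) / det(A,B,R) in F^* (injectivity is a Grassmann-Pluecker relation), so by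
   Wilson's theorem for F the product of these quotients over R is -1.  Multiplying the
   products for the vertices A, B, C, all determinants cancel and (-1)^3 = 1, which is
   impossible in odd characteristic. *)

lemma prod_involution_eq_1:
  fixes f :: "'a \<Rightarrow> 'b::comm_monoid_mult"
  assumes "finite X"
    and "\<And>x. x \<in> X \<Longrightarrow> f (h x) * f x = 1"
    and "\<And>x. x \<in> X \<Longrightarrow> h x \<in> X" "\<And>x. x \<in> X \<Longrightarrow> h (h x) = x" "\<And>x. x \<in> X \<Longrightarrow> h x \<noteq> x"
  shows "(\<Prod>x\<in>X. f x) = 1"
  using assms
proof (induction X rule: finite_psubset_induct)
  case (psubset X)
  show ?case
  proof (cases "X = {}")
    case False
    then obtain x where x: "x \<in> X" by blast
    let ?Y = "X - {x, h x}"
    have "h y \<in> ?Y" if "y \<in> ?Y" for y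
    proof -
      have "h y \<noteq> x" "h y \<noteq> h x"
        using that x psubset.prems(3) by (metis DiffD1 DiffD2 insertI1 insertI2 singletonI)+
      then show ?thesis using that psubset.prems(2) by blast
    qed
    then have "(\<Prod>y\<in>?Y. f y) = 1"
      using x psubset.prems by (intro psubset.IH) auto
    moreover have "(\<Prod>y\<in>X. f y) = f x * (f (h x) * (\<Prod>y\<in>X - {x} - {h x}. f y))"
      using psubset.hyps(1) x psubset.prems(2,4)
      by (simp add: prod.remove [of X x] prod.remove [of "X - {x}" "h x"])
    ultimately show ?thesis
      using x psubset.prems(1) by (simp add: set_diff_eq mult.assoc [symmetric] mult.commute [of "f x"])
  qed simp
qed

lemma one_neq_minus_one_if_odd_card:
  assumes "odd (card (UNIV :: 'a set))"
  shows "(1::'a::{field,finite}) \<noteq> -1"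
proof
  assume "(1::'a) = -1"
  then have "(1::'a) + 1 = 0"
    by (simp only: eq_neg_iff_add_eq_0)
  then have "(\<Prod>x\<in>(UNIV :: 'a set). -1 :: int) = 1"
    by (intro prod_involution_eq_1 [where h = "\<lambda>x. x + 1"]) (auto simp: add.assoc)
  then show False using assms by simp
qed

lemma prod_nonzero_eq_minus_one: "(\<Prod>x\<in>-{0}. x) = (-1 :: 'a::{field,finite})"
proof -
  let ?A = "-{0, 1, -1 :: 'a}"
  have square_eq_1: "x = 1 \<or> x = -1" if "x * x = 1" for x :: 'a
  proof -
    have "(x - 1) * (x + 1) = 0" using that by (simp add: algebra_simps)
    then show ?thesis by (auto simp: eq_neg_iff_add_eq_0)
  qed
  have "inverse x \<noteq> x" if "x \<in> ?A" for x
    using that square_eq_1 [of x] by (metis ComplD insertCI right_inverse)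
  then have "(\<Prod>x\<in>?A. x) = 1"
    by (intro prod_involution_eq_1 [where h = inverse])
      (auto simp: inverse_eq_iff_eq [of _ "-1", simplified])
  moreover have "-{0 :: 'a} = insert 1 (insert (-1) ?A)" by auto
  ultimately show ?thesis
    by (cases "(1::'a) = -1") (simp_all add: insert_absorb)
qed

lemma prod_inj_on_nonzero_eq_minus_one:
  fixes f :: "'b \<Rightarrow> 'a::{field,finite}"
  assumes "inj_on f T" "\<And>x. x \<in> T \<Longrightarrow> f x \<noteq> 0" "card T = card (UNIV :: 'a set) - 1"
  shows "(\<Prod>x\<in>T. f x) = -1"
proof -
  have "card (-{0 :: 'a}) = card (UNIV :: 'a set) - 1"
    by (simp add: Compl_eq_Diff_UNIV card_Diff_singleton)
  then have "f ` T = -{0}"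
    using assms by (intro card_subset_eq) (auto simp: card_image)
  have "(\<Prod>x\<in>T. f x) = (\<Prod>y\<in>f ` T. y)"
    by (simp add: prod.reindex [OF assms(1)])
  also have "\<dots> = -1"
    using \<open>f ` T = -{0}\<close> by (simp add: prod_nonzero_eq_minus_one)
  finally show ?thesis .
qed

definition det3 :: "'a::field \<times> 'a \<times> 'a \<Rightarrow> 'a \<times> 'a \<times> 'a \<Rightarrow> 'a \<times> 'a \<times> 'a \<Rightarrow> 'a" where
  "det3 u v w = (case u of (u1, u2, u3) \<Rightarrow> case v of (v1, v2, v3) \<Rightarrow> case w of (w1, w2, w3) \<Rightarrow>
     u1 * (v2 * w3 - v3 * w2) - u2 * (v1 * w3 - v3 * w1) + u3 * (v1 * w2 - v2 * w1))"

definition cross3 :: "'a::field \<times> 'a \<times> 'a \<Rightarrow> 'a \<times> 'a \<times> 'a \<Rightarrow> 'a \<times> 'a \<times> 'a" where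
  "cross3 u v = (case u of (u1, u2, u3) \<Rightarrow> case v of (v1, v2, v3) \<Rightarrow>
     (u2 * v3 - u3 * v2, u3 * v1 - u1 * v3, u1 * v2 - u2 * v1))"

lemma dot3_cross3: "dot3 (cross3 u v) w = det3 u v w"
  unfolding dot3_def cross3_def det3_def case_prod_unfold prod.sel by algebra

lemma det3_rotate: "det3 u v w = det3 v w u"
  unfolding det3_def case_prod_unfold by algebra

lemma det3_swap: "det3 u w v = - det3 u v w"
  unfolding det3_def case_prod_unfold by algebra

lemma det3_repeated [simp]: "det3 u v u = 0" "det3 u v v = 0"
  unfolding det3_def case_prod_unfold by algebra+

lemma det3_grassmann_pluecker:
  "det3 a r c * det3 a b s - det3 a s c * det3 a b r = det3 a b c * det3 a r s"
  unfolding det3_def case_prod_unfold by algebra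

lemma orthogonal_vector_exists: "\<exists>l. l \<noteq> (0, 0, 0) \<and> dot3 l u = (0::'a::field)"
proof -
  obtain u1 u2 u3 where u: "u = (u1, u2, u3)" by (cases u)
  show ?thesis
  proof (cases "u1 = 0 \<and> u2 = 0")
    case True
    then show ?thesis by (intro exI [of _ "(1, 0, 0)"]) (simp add: u dot3_def)
  next
    case False
    then show ?thesis by (intro exI [of _ "(u2, -u1, 0)"]) (auto simp: u dot3_def algebra_simps)
  qed
qed

lemma dot3_eq_0_if_cross3_eq_0:
  fixes u v l :: "'a::field \<times> 'a \<times> 'a"
  assumes "u \<noteq> (0, 0, 0)" "cross3 u v = (0, 0, 0)" "dot3 l u = 0"
  shows "dot3 l v = 0"
proof -
  obtain u1 u2 u3 where u: "u = (u1, u2, u3)" by (cases u)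
  obtain v1 v2 v3 where v: "v = (v1, v2, v3)" by (cases v)
  obtain l1 l2 l3 where l: "l = (l1, l2, l3)" by (cases l)
  have "u2 * v3 = u3 * v2" "u3 * v1 = u1 * v3" "u1 * v2 = u2 * v1"
    using assms(2) by (simp_all add: u v cross3_def)
  then have "u1 * dot3 l v = v1 * dot3 l u" "u2 * dot3 l v = v2 * dot3 l u" "u3 * dot3 l v = v3 * dot3 l u"
    by (simp_all add: u v l dot3_def) algebra+
  then show ?thesis using assms(1,3) by (auto simp: u)
qed

lemma common_orthogonal_if_det3_eq_0:
  fixes u v w :: "'a::field \<times> 'a \<times> 'a"
  assumes "u \<noteq> (0, 0, 0)" "det3 u v w = 0"
  shows "\<exists>l. l \<noteq> (0, 0, 0) \<and> dot3 l u = 0 \<and> dot3 l v = 0 \<and> dot3 l w = 0"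
proof (cases "cross3 u v = (0, 0, 0)")
  case False
  then show ?thesis
    using assms(2) by (intro exI [of _ "cross3 u v"]) (simp add: dot3_cross3)
next
  case uv: True
  show ?thesis
  proof (cases "cross3 u w = (0, 0, 0)")
    case False
    then show ?thesis
      using assms(2) det3_swap [of u v w] by (intro exI [of _ "cross3 u w"]) (simp add: dot3_cross3)
  next
    case True
    obtain l where "l \<noteq> (0, 0, 0)" "dot3 l u = 0" using orthogonal_vector_exists by blast
    then show ?thesis using assms(1) uv True by (blast intro: dot3_eq_0_if_cross3_eq_0)
  qed
qed

lemma proj_pt_in_proj_line:
  fixes x l :: "'a::field \<times> 'a \<times> 'a"
  assumes "x \<noteq> (0, 0, 0)" "dot3 l x = 0"
  shows "proj_pt x \<in> proj_line l"
proof -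
  have "dot3 l y = 0" if "y \<in> proj_pt x" for y
  proof -
    obtain c where "y = (c * fst x, c * fst (snd x), c * snd (snd x))"
      using \<open>y \<in> proj_pt x\<close> by (auto simp: proj_pt_def split: prod.splits)
    then have "dot3 l y = c * dot3 l x"
      by (simp add: dot3_def algebra_simps split: prod.splits)
    then show ?thesis using assms(2) by simp
  qed
  then show ?thesis using assms(1) by (simp add: proj_line_def proj_points_def)
qed

lemma collinear_if_det3_eq_0:
  fixes u v w :: "'a::field \<times> 'a \<times> 'a"
  assumes "u \<noteq> (0, 0, 0)" "v \<noteq> (0, 0, 0)" "w \<noteq> (0, 0, 0)" "det3 u v w = 0"
  shows "\<exists>L\<in>proj_lines. proj_pt u \<in> L \<and> proj_pt v \<in> L \<and> proj_pt w \<in> L"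
proof -
  obtain l where "l \<noteq> (0, 0, 0)" "dot3 l u = 0" "dot3 l v = 0" "dot3 l w = 0"
    using common_orthogonal_if_det3_eq_0 [OF assms(1,4)] by blast
  then show ?thesis
    using assms(1-3) by (intro bexI [of _ "proj_line l"]) (auto simp: proj_lines_def proj_pt_in_proj_line)
qed

definition proj_rep :: "('a::field \<times> 'a \<times> 'a) set \<Rightarrow> 'a \<times> 'a \<times> 'a" where
  "proj_rep P = (SOME v. v \<noteq> (0, 0, 0) \<and> P = proj_pt v)"

lemma proj_rep:
  assumes "P \<in> proj_points"
  shows "proj_rep P \<noteq> (0, 0, 0)" "proj_pt (proj_rep P) = P"
proof -
  have "\<exists>v. v \<noteq> (0, 0, 0) \<and> P = proj_pt v"
    using assms by (auto simp: proj_points_def)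
  then have "proj_rep P \<noteq> (0, 0, 0) \<and> P = proj_pt (proj_rep P)"
    unfolding proj_rep_def by (rule someI_ex)
  then show "proj_rep P \<noteq> (0, 0, 0)" "proj_pt (proj_rep P) = P" by simp_all
qed

(* point_det depends on the chosen representatives; only its vanishing, and quotients in which
   each point occurs equally often above and below, are intrinsic. *)

definition point_det :: "('a::field \<times> 'a \<times> 'a) set \<Rightarrow> ('a \<times> 'a \<times> 'a) set \<Rightarrow> ('a \<times> 'a \<times> 'a) set \<Rightarrow> 'a" where
  "point_det P Q R = det3 (proj_rep P) (proj_rep Q) (proj_rep R)"

lemma point_det_rotate: "point_det P Q R = point_det Q R P"
  unfolding point_det_def by (rule det3_rotate)

definition no_trisecant_through :: "('a::field \<times> 'a \<times> 'a) set set \<Rightarrow> ('a \<times> 'a \<times> 'a) set \<Rightarrow> bool" where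
  "no_trisecant_through S P \<longleftrightarrow> (\<forall>L\<in>proj_lines. P \<in> L \<longrightarrow> card (L \<inter> S) \<le> 2)"

lemma point_det_neq_0:
  fixes S :: "('a::{field,finite} \<times> 'a \<times> 'a) set set"
  assumes "S \<subseteq> proj_points" "no_trisecant_through S X" "{X, Y, Z} \<subseteq> S" "distinct [X, Y, Z]"
  shows "point_det X Y Z \<noteq> 0"
proof
  assume "point_det X Y Z = 0"
  moreover have reps: "proj_rep P \<noteq> (0, 0, 0)" "proj_pt (proj_rep P) = P" if "P \<in> {X, Y, Z}" for P
    using that assms(1,3) proj_rep by auto
  ultimately obtain L where L: "L \<in> proj_lines" "{X, Y, Z} \<subseteq> L"
    using collinear_if_det3_eq_0 [of "proj_rep X" "proj_rep Y" "proj_rep Z"]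
    by (auto simp: point_det_def)
  have "3 = card {X, Y, Z}" using assms(4) by simp
  also have "\<dots> \<le> card (L \<inter> S)" using L(2) assms(3) by (intro card_mono) auto
  finally show False using assms(2) L by (auto simp: no_trisecant_through_def)
qed

lemma prod_point_det_quotient_eq_minus_one:
  fixes S :: "('a::{field,finite} \<times> 'a \<times> 'a) set set"
  assumes "S \<subseteq> proj_points" "card S = card (UNIV :: 'a set) + 2"
    and "no_trisecant_through S A" "{A, B, C} \<subseteq> S" "distinct [A, B, C]"
  shows "(\<Prod>R\<in>S - {A, B, C}. point_det C A R) / (\<Prod>R\<in>S - {A, B, C}. point_det A B R) = -1"
proof -
  let ?T = "S - {A, B, C}"
  have other: "{A, B, C, R} \<subseteq> S" "distinct [A, B, C, R]" if "R \<in> ?T" for R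
    using that assms(4,5) by auto
  have "card ?T = card S - card {A, B, C}"
    using assms(4) by (intro card_Diff_subset) auto
  then have card_T: "card ?T = card (UNIV :: 'a set) - 1"
    using assms(2,5) by simp
  have det_ABC: "point_det A B C \<noteq> 0"
    using assms(4,5) by (intro point_det_neq_0 [OF assms(1,3)])
  have det_ARC: "point_det A R C \<noteq> 0" if "R \<in> ?T" for R
    using other [OF that] by (intro point_det_neq_0 [OF assms(1,3)]) auto
  have det_ABR: "point_det A B R \<noteq> 0" if "R \<in> ?T" for R
    using other [OF that] by (intro point_det_neq_0 [OF assms(1,3)]) auto
  have "inj_on (\<lambda>R. point_det A R C / point_det A B R) ?T"
  proof (rule inj_onI, rule ccontr)
    fix R R'
    assume R: "R \<in> ?T" "R' \<in> ?T" "R \<noteq> R'"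
      and "point_det A R C / point_det A B R = point_det A R' C / point_det A B R'"
    then have "point_det A R C * point_det A B R' - point_det A R' C * point_det A B R = 0"
      using det_ABR by (simp add: frac_eq_eq)
    then have "point_det A B C * point_det A R R' = 0"
      unfolding point_det_def det3_grassmann_pluecker .
    moreover have "point_det A R R' \<noteq> 0"
      using R assms(4) by (intro point_det_neq_0 [OF assms(1,3)]) auto
    ultimately show False using det_ABC by simp
  qed
  then have "(\<Prod>R\<in>?T. point_det A R C / point_det A B R) = -1"
    using det_ARC det_ABR card_T by (intro prod_inj_on_nonzero_eq_minus_one) auto
  then show ?thesis
    by (simp add: prod_dividef point_det_rotate [of C A])
qed

theorem proposition1p3:
  fixes S :: "('a::{field, finite} \<times> 'a \<times> 'a) set set"
  assumes "odd (card (UNIV :: 'a set))"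
    and "S \<subseteq> proj_points"
    and "card S = card (UNIV :: 'a set) + 2"
  shows "card {P \<in> S. \<forall>L\<in>proj_lines. P \<in> L \<longrightarrow> card (L \<inter> S) \<le> 2} \<le> 2"
proof (rule ccontr)
  assume "\<not> ?thesis"
  then have "3 \<le> card {P \<in> S. no_trisecant_through S P}"
    by (simp add: no_trisecant_through_def)
  then obtain U where "U \<subseteq> {P \<in> S. no_trisecant_through S P}" "card U = 3"
    by (meson obtain_subset_with_card_n)
  then obtain A B C where ABC: "distinct [A, B, C]" "{A, B, C} \<subseteq> {P \<in> S. no_trisecant_through S P}"
    by (auto simp: card_3_iff)
  let ?T = "S - {A, B, C}"
  define x y z where "x = (\<Prod>R\<in>?T. point_det A B R)"
    and "y = (\<Prod>R\<in>?T. point_det B C R)" and "z = (\<Prod>R\<in>?T. point_det C A R)"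
  have T_rotate: "S - {B, C, A} = ?T" "S - {C, A, B} = ?T" by auto
  have "z / x = -1"
    unfolding x_def z_def using ABC
    by (intro prod_point_det_quotient_eq_minus_one [OF assms(2,3)]) auto
  moreover have "x / y = -1"
    unfolding x_def y_def T_rotate(1) [symmetric] using ABC
    by (intro prod_point_det_quotient_eq_minus_one [OF assms(2,3)]) auto
  moreover have "y / z = -1"
    unfolding y_def z_def T_rotate(2) [symmetric] using ABC
    by (intro prod_point_det_quotient_eq_minus_one [OF assms(2,3)]) auto
  ultimately have "(z / x) * (x / y) * (y / z) = -1" and "x \<noteq> 0" "y \<noteq> 0" "z \<noteq> 0"
    by auto
  then have "(1::'a) = -1" by (simp add: field_simps)
  then show False using one_neq_minus_one_if_odd_card assms(1) by blast
qed

end
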